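(* Let $\Bbbk$ be a field and let $A=\bigoplus_{i\ge 0}A_i$ be a regular graded $\Bbbk$-algebra with $A_0=\Bbbk$. Let $M=\bigoplus_{i\ge0}M_i$ be a finitely generated graded $A$-module which is free, and let $r=r(M,A)$. Let $g_1,\dots,g_r\in M$ be homogeneous elements which are $A$-independent. Then \[\sum_{i=1}^r \deg(g_i)\ \ge\ s(M,A),\] with equality if and only if $g_1,\dots,g_r$ generate $M$ as an $A$-module (in which case they form a basis of $M$).
   Context: For a graded $\Bbbk$-algebra $A$ with $A_0=\Bbbk$ and a finitely generated graded $A$-module $M$, the Hilbert series are $H(A,t)=\sum_i\dim_\Bbbk(A_i)t^i$ and $H(M,t)=\sum_i \dim_\Bbbk(M_i)t^i$. Expand the quotient about $t=1$: $H(M,t)/H(A,t)=a_0+a_1(t-1)+\cdots$. The rank is $r(M,A)=a_0$ and the $s$-invariant is $s(M,A)=a_1$. Elements $g_1,\dots,g_r$ are $A$-independent if $\sum a_ig_i=0$ with $a_i\in A$ implies all $a_i=0$. *)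

theory Defs
  imports Complex_Main
begin

definition graded_decomposition :: "(nat \<Rightarrow> 'm::ab_group_add set) \<Rightarrow> bool" where
  "graded_decomposition G \<longleftrightarrow>
     (\<forall>i. 0 \<in> G i \<and> (\<forall>x\<in>G i. \<forall>y\<in>G i. x + y \<in> G i \<and> - x \<in> G i)) \<and>
     (\<forall>x. \<exists>!c. (\<forall>i. c i \<in> G i) \<and> finite {i. c i \<noteq> 0} \<and> x = (\<Sum>i\<in>{i. c i \<noteq> 0}. c i))"

definition connected_graded_algebra ::
    "('k::field \<Rightarrow> 'a::comm_ring_1) \<Rightarrow> (nat \<Rightarrow> 'a set) \<Rightarrow> bool" where
  "connected_graded_algebra phi Agr \<longleftrightarrow>
     (\<forall>c d. phi (c + d) = phi c + phi d \<and> phi (c * d) = phi c * phi d) \<and> phi 1 = 1 \<and>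
     graded_decomposition Agr \<and>
     (\<forall>i j. \<forall>x\<in>Agr i. \<forall>y\<in>Agr j. x * y \<in> Agr (i + j)) \<and>
     Agr 0 = range phi"

definition monomial_in :: "nat \<Rightarrow> (nat \<Rightarrow> 'a::comm_ring_1) \<Rightarrow> (nat \<Rightarrow> nat) \<Rightarrow> 'a" where
  "monomial_in n x alpha = (\<Prod>j<n. x j ^ alpha j)"

definition exponents :: "nat \<Rightarrow> (nat \<Rightarrow> nat) set" where
  "exponents n = {alpha. \<forall>j\<ge>n. alpha j = 0}"

text \<open>Regular graded algebra: a polynomial algebra over k = A_0 on finitely many
  homogeneous generators of positive degree, i.e. the monomials in the generators
  form a k-basis of A.\<close>
definition regular_graded_algebra ::
    "('k::field \<Rightarrow> 'a::comm_ring_1) \<Rightarrow> (nat \<Rightarrow> 'a set) \<Rightarrow> bool" where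
  "regular_graded_algebra phi Agr \<longleftrightarrow>
     connected_graded_algebra phi Agr \<and>
     (\<exists>n x e. (\<forall>j<n. 0 < e j \<and> x j \<in> Agr (e j)) \<and>
        (\<forall>a. \<exists>F c. finite F \<and> F \<subseteq> exponents n \<and>
              a = (\<Sum>alpha\<in>F. phi (c alpha) * monomial_in n x alpha)) \<and>
        (\<forall>F c. finite F \<longrightarrow> F \<subseteq> exponents n \<longrightarrow>
              (\<Sum>alpha\<in>F. phi (c alpha) * monomial_in n x alpha) = 0 \<longrightarrow>
              (\<forall>alpha\<in>F. c alpha = 0)))"

definition graded_module ::
    "(nat \<Rightarrow> 'a::comm_ring_1 set) \<Rightarrow> ('a \<Rightarrow> 'm::ab_group_add \<Rightarrow> 'm) \<Rightarrow> (nat \<Rightarrow> 'm set) \<Rightarrow> bool" where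
  "graded_module Agr sm Mgr \<longleftrightarrow>
     module sm \<and> graded_decomposition Mgr \<and>
     (\<forall>i j. \<forall>a\<in>Agr i. \<forall>m\<in>Mgr j. sm a m \<in> Mgr (i + j))"

text \<open>Hilbert series (as a real function, for 0 < t < 1) of a graded object whose
  pieces are k-vector spaces under the scalar multiplication scl.\<close>
definition hilbert_series ::
    "('k::field \<Rightarrow> 'b::ab_group_add \<Rightarrow> 'b) \<Rightarrow> (nat \<Rightarrow> 'b set) \<Rightarrow> real \<Rightarrow> real" where
  "hilbert_series scl G t = (\<Sum>i. real (vector_space.dim scl (G i)) * t ^ i)"

definition hilbert_quotient ::
    "('k::field \<Rightarrow> 'a::comm_ring_1) \<Rightarrow> (nat \<Rightarrow> 'a set) \<Rightarrow> ('a \<Rightarrow> 'm::ab_group_add \<Rightarrow> 'm)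
       \<Rightarrow> (nat \<Rightarrow> 'm set) \<Rightarrow> real \<Rightarrow> real" where
  "hilbert_quotient phi Agr sm Mgr t =
     hilbert_series (\<lambda>c m. sm (phi c) m) Mgr t / hilbert_series (\<lambda>c a. phi c * a) Agr t"

text \<open>Writing H(M,t)/H(A,t) = a0 + a1 (t - 1) + ..., the rank r(M,A) = a0 and the
  s-invariant s(M,A) = a1 (coefficients of the expansion about t = 1, computed as
  limits from the region 0 < t < 1 where the series converge).\<close>
definition rank_inv ::
    "('k::field \<Rightarrow> 'a::comm_ring_1) \<Rightarrow> (nat \<Rightarrow> 'a set) \<Rightarrow> ('a \<Rightarrow> 'm::ab_group_add \<Rightarrow> 'm)
       \<Rightarrow> (nat \<Rightarrow> 'm set) \<Rightarrow> real" where
  "rank_inv phi Agr sm Mgr = Lim (at_left 1) (hilbert_quotient phi Agr sm Mgr)"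

definition s_inv ::
    "('k::field \<Rightarrow> 'a::comm_ring_1) \<Rightarrow> (nat \<Rightarrow> 'a set) \<Rightarrow> ('a \<Rightarrow> 'm::ab_group_add \<Rightarrow> 'm)
       \<Rightarrow> (nat \<Rightarrow> 'm set) \<Rightarrow> real" where
  "s_inv phi Agr sm Mgr =
     Lim (at_left 1) (\<lambda>t. (hilbert_quotient phi Agr sm Mgr t - rank_inv phi Agr sm Mgr) / (t - 1))"

end

theory Submission
  imports Defs "Jordan_Normal_Form.Determinant" "HOL-Real_Asymp.Real_Asymp"
begin

(* A regular algebra A is a polynomial ring on homogeneous generators, and a finitely generated
   free graded A-module M has a homogeneous basis b_1, ..., b_R of degrees beta_j: a shortest
   homogeneous generating family is a basis by graded Nakayama. The monomial multiples of the b_j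
   form a k-basis of M, so H(M,t) = (sum_j t^beta_j) H(A,t), whence r(M,A) = R and
   s(M,A) = sum_j beta_j. For independent homogeneous g_1, ..., g_r of degrees d_i the monomial
   multiples of the g_i are still independent, so sum_i t^d_i <= sum_j t^beta_j on (0,1); both
   sides equal r at t = 1, and comparing derivatives there gives sum_i d_i >= s(M,A). The matrix
   expressing the g_i in the b_j has homogeneous entries of degree d_i - beta_j, so under equality
   its determinant has degree 0, i.e. lies in k. By McCoy's theorem it is nonzero since the g_i
   are independent; hence it is a unit and the g_i form a basis. *)

section \<open>Power series and limits at 1\<close>

lemma summable_power_times_geometric:
  fixes t :: real assumes t: "0 < t" "t < 1"
  shows "summable (\<lambda>i. real (Suc i) ^ k * t ^ i)"
proof -
  let ?c = "(1 + t) / 2"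
  have "(\<lambda>i. (real i + 2) / (real i + 1)) \<longlonglongrightarrow> 1" by real_asymp
  then have "(\<lambda>i. ((real i + 2) / (real i + 1)) ^ k) \<longlonglongrightarrow> 1"
    using tendsto_power by fastforce
  moreover have "1 < ?c / t" using t by (simp add: field_simps)
  ultimately have "eventually (\<lambda>i. ((real i + 2) / (real i + 1)) ^ k < ?c / t) sequentially"
    by (rule order_tendstoD(2))
  then obtain N where N: "\<And>i. i \<ge> N \<Longrightarrow> ((real i + 2) / (real i + 1)) ^ k < ?c / t"
    unfolding eventually_sequentially by blast
  show ?thesis
  proof (rule summable_ratio_test[of ?c N])
    show "?c < 1" using t by simp
    fix i assume i: "N \<le> i"
    have "real (Suc (Suc i)) ^ k * t ^ Suc i = ((real i + 2) / (real i + 1)) ^ k * t * (real (Suc i) ^ k * t ^ i)"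
      by (simp add: power_divide field_simps)
    also have "\<dots> \<le> ?c * (real (Suc i) ^ k * t ^ i)"
      using N[OF i] t by (intro mult_right_mono) (auto simp: field_simps)
    finally show "norm (real (Suc (Suc i)) ^ k * t ^ Suc i) \<le> ?c * norm (real (Suc i) ^ k * t ^ i)"
      using t by simp
  qed
qed

lemma sums_shifted:
  fixes t :: real
  assumes "(\<lambda>i. real (a i) * t ^ i) sums s"
  shows "(\<lambda>i. real (if b \<le> i then a (i - b) else 0) * t ^ i) sums (t ^ b * s)"
proof -
  let ?g = "\<lambda>i. real (if b \<le> i then a (i - b) else 0) * t ^ i"
  have "(\<lambda>i. ?g (i + b)) = (\<lambda>i. t ^ b * (real (a i) * t ^ i))"
    by (auto simp: power_add mult_ac)
  then have "(\<lambda>i. ?g (i + b)) sums (t ^ b * s)"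
    using sums_mult[OF assms] by simp
  then have "?g sums (t ^ b * s + (\<Sum>i<b. ?g i))" by (rule sums_iff_shift[THEN iffD1])
  then show ?thesis by simp
qed

lemma sums_sum_shifted:
  fixes t :: real
  assumes "(\<lambda>i. real (a i) * t ^ i) sums s"
  shows "(\<lambda>i. real (\<Sum>j<R. if d j \<le> i then a (i - d j) else 0) * t ^ i) sums ((\<Sum>j<R. t ^ d j) * s)"
  using sums_sum[of "{..<R}", OF sums_shifted[OF assms]] by (simp add: sum_distrib_right)

lemma tendsto_sum_powers_at_left_1:
  "((\<lambda>t::real. \<Sum>j<R. t ^ d j) \<longlongrightarrow> real R) (at_left 1)"
proof -
  have "((\<lambda>t::real. \<Sum>j<R. t ^ d j) \<longlongrightarrow> (\<Sum>j<R. 1 ^ d j)) (at_left 1)"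
    by (intro tendsto_intros)
  then show ?thesis by simp
qed

lemma tendsto_sum_powers_difference_quotient:
  "((\<lambda>t::real. ((\<Sum>j<R. t ^ d j) - real R) / (t - 1)) \<longlongrightarrow> real (\<Sum>j<R. d j)) (at_left 1)"
proof -
  have "((\<lambda>t::real. \<Sum>j<R. t ^ d j) has_real_derivative real (\<Sum>j<R. d j)) (at 1)"
    by (auto intro!: derivative_eq_intros)
  then show ?thesis unfolding has_field_derivative_iff by (auto intro: tendsto_within_subset)
qed

lemma degree_sum_le_if_sum_powers_le:
  fixes r :: nat
  assumes le: "\<And>t::real. 0 < t \<Longrightarrow> t < 1 \<Longrightarrow> (\<Sum>j<r. t ^ d j) \<le> (\<Sum>j<r. t ^ \<beta> j)"
  shows "(\<Sum>j<r. \<beta> j) \<le> (\<Sum>j<r. d j)"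
proof -
  have ev: "eventually (\<lambda>t. ((\<Sum>j<r. t ^ \<beta> j) - real r) / (t - 1) \<le> ((\<Sum>j<r. t ^ d j) - real r) / (t - 1))
      (at_left (1::real))"
  proof (rule eventually_mono[OF eventually_at_left_real[of 0 1]])
    fix t :: real assume "t \<in> {0<..<1}"
    then show "((\<Sum>j<r. t ^ \<beta> j) - real r) / (t - 1) \<le> ((\<Sum>j<r. t ^ d j) - real r) / (t - 1)"
      using le[of t] by (intro divide_right_mono_neg) auto
  qed simp
  have "real (\<Sum>j<r. \<beta> j) \<le> real (\<Sum>j<r. d j)"
    using tendsto_le[OF _ tendsto_sum_powers_difference_quotient tendsto_sum_powers_difference_quotient ev]
      trivial_limit_at_left_real by blast
  then show ?thesis by (simp only: of_nat_le_iff)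
qed

section \<open>Finite families in modules\<close>

definition independent_family ::
    "('a::zero \<Rightarrow> 'b::comm_monoid_add \<Rightarrow> 'b) \<Rightarrow> nat \<Rightarrow> (nat \<Rightarrow> 'b) \<Rightarrow> bool" where
  "independent_family scl R b \<longleftrightarrow> (\<forall>a. (\<Sum>j<R. scl (a j) (b j)) = 0 \<longrightarrow> (\<forall>j<R. a j = 0))"

context Modules.module
begin

lemma independent_familyD:
  "independent_family (*s) R b \<Longrightarrow> (\<Sum>j<R. a j *s b j) = 0 \<Longrightarrow> j < R \<Longrightarrow> a j = 0"
  unfolding independent_family_def by blast

lemma independent_family_unique:
  assumes "independent_family (*s) R b" "(\<Sum>j<R. a j *s b j) = (\<Sum>j<R. a' j *s b j)" "j < R"
  shows "a j = a' j"
proof -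
  have "(\<Sum>j<R. (a j - a' j) *s b j) = 0"
    using assms(2) by (simp add: scale_left_diff_distrib sum_subtractf)
  from independent_familyD[OF assms(1) this assms(3)] show ?thesis by simp
qed

lemma span_image_lessThan:
  fixes N :: nat
  shows "span (f ` {..<N}) = {(\<Sum>j<N. a j *s f j) | a. True}"
proof
  let ?R = "{(\<Sum>j<N. a j *s f j) | a. True}"
  show "span (f ` {..<N}) \<subseteq> ?R"
  proof (rule span_minimal)
    show "f ` {..<N} \<subseteq> ?R"
    proof
      fix y assume "y \<in> f ` {..<N}"
      then obtain k where "k < N" "y = f k" by blast
      then have "f k = (\<Sum>j<N. (if j = k then 1 else 0) *s f j)"
        using sum.delta[of "{..<N}" k "\<lambda>_. f k"]
        by (simp add: if_distrib[of "\<lambda>c. c *s _"] cong: if_cong)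
      then show "y \<in> ?R" using \<open>y = f k\<close> by (intro CollectI exI[of _ "\<lambda>j. if j = k then 1 else 0"]) simp
    qed
    show "subspace ?R" unfolding subspace_def
    proof (intro conjI ballI allI)
      show "0 \<in> ?R" by (rule CollectI, rule exI[of _ "\<lambda>_. 0"]) simp
      fix y z assume "y \<in> ?R" "z \<in> ?R"
      then obtain a b where "y = (\<Sum>j<N. a j *s f j)" "z = (\<Sum>j<N. b j *s f j)" by blast
      then have "y + z = (\<Sum>j<N. (a j + b j) *s f j)" by (simp add: scale_left_distrib sum.distrib)
      then show "y + z \<in> ?R" by (intro CollectI exI[of _ "\<lambda>j. a j + b j"]) simp
    next
      fix c y assume "y \<in> ?R"
      then obtain a where "y = (\<Sum>j<N. a j *s f j)" by blast
      then have "c *s y = (\<Sum>j<N. (c * a j) *s f j)" by (simp add: scale_sum_right)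
      then show "c *s y \<in> ?R" by (intro CollectI exI[of _ "\<lambda>j. c * a j"]) simp
    qed
  qed
  show "?R \<subseteq> span (f ` {..<N})"
    by (clarify, intro span_sum span_scale span_base) auto
qed

lemma span_UNIV_obtains_coefficients:
  fixes R :: nat
  assumes "span (b ` {..<R}) = UNIV"
  obtains a where "\<And>i. g i = (\<Sum>c<R. a i c *s b c)"
proof -
  have "\<exists>a. g i = (\<Sum>c<R. a c *s b c)" for i
  proof -
    have "g i \<in> span (b ` {..<R})" using assms by simp
    then show ?thesis unfolding span_image_lessThan by blast
  qed
  then show ?thesis using that by metis
qed

lemma sum_scale_combination:
  fixes r R :: nat
  shows "(\<Sum>i<r. v i *s (\<Sum>c<R. a i c *s b c)) = (\<Sum>c<R. (\<Sum>i<r. v i * a i c) *s b c)"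
  by (simp add: scale_sum_right scale_sum_left sum.swap[of _ "{..<r}"])

lemma span_eq_UNIV_if_subset_span: "A \<subseteq> span E \<Longrightarrow> span A = UNIV \<Longrightarrow> span E = UNIV"
  using span_minimal[OF _ subspace_span, of A E] by auto

lemma independent_family_if_bij_betw:
  assumes b: "bij_betw b {..<R} B" and B: "independent B"
  shows "independent_family (*s) R b"
  unfolding independent_family_def
proof (intro allI impI)
  fix a j assume s: "(\<Sum>j<R. a j *s b j) = 0" and j: "j < R"
  have inj: "inj_on b {..<R}" and im: "b ` {..<R} = B" using b by (auto simp: bij_betw_def)
  define u where "u v = a (the_inv_into {..<R} b v)" for v
  have "(\<Sum>v\<in>B. u v *s v) = (\<Sum>j<R. u (b j) *s b j)"
    unfolding im[symmetric] by (rule sum.reindex[OF inj, unfolded comp_def])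
  also have "\<dots> = 0"
    using s unfolding u_def by (simp add: the_inv_into_f_f[OF inj])
  finally have "u (b j) = 0"
    using independentD[OF B _ order_refl] j im finite_imageI[of "{..<R}" b] by blast
  then show "a j = 0" unfolding u_def using j by (simp add: the_inv_into_f_f[OF inj])
qed

lemma finite_independent_family_if_free:
  fixes m :: nat
  assumes B: "independent B" "span B = UNIV" and h: "span (h ` {..<m}) = UNIV"
  obtains R b where "independent_family (*s) R b" "span (b ` {..<R}) = UNIV"
proof -
  have "\<exists>T. finite T \<and> T \<subseteq> B \<and> h k \<in> span T" for k
  proof -
    obtain t r where t: "finite t" "t \<subseteq> B" "h k = (\<Sum>a\<in>t. r a *s a)"
      using B(2) unfolding span_explicit by blast
    then have "h k \<in> span t" by (auto intro: span_sum span_scale span_base)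
    then show ?thesis using t by blast
  qed
  then obtain T where T: "\<And>k. finite (T k)" "\<And>k. T k \<subseteq> B" "\<And>k. h k \<in> span (T k)" by metis
  define U where "U = (\<Union>k<m. T k)"
  have "U \<subseteq> B" using T(2) by (auto simp: U_def)
  then have U: "finite U" "independent U" using T(1) independent_mono[OF B(1)] by (auto simp: U_def)
  have "h ` {..<m} \<subseteq> span U"
    using T(3) span_mono[of "T _" U] by (force simp: U_def)
  then have "span U = UNIV" using h by (rule span_eq_UNIV_if_subset_span)
  moreover obtain b where b: "bij_betw b {..<card U} U"
    using ex_bij_betw_nat_finite[OF U(1)] by (auto simp: atLeast0LessThan)
  moreover have "b ` {..<card U} = U" using b by (simp add: bij_betw_def)
  ultimately show ?thesis using that[OF independent_family_if_bij_betw[OF b U(2)]] by simp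
qed

lemma span_if_unit_coefficient:
  fixes m :: nat
  assumes rel: "(\<Sum>k<m. c k *s h k) = 0" and u: "u * c k0 = 1" and k0: "k0 < m"
  shows "h k0 \<in> span (h ` ({..<m} - {k0}))"
proof -
  have "c k0 *s h k0 + (\<Sum>k\<in>{..<m} - {k0}. c k *s h k) = 0"
    using rel sum.remove[of "{..<m}" k0 "\<lambda>k. c k *s h k"] k0 by simp
  then have "c k0 *s h k0 = - (\<Sum>k\<in>{..<m} - {k0}. c k *s h k)"
    by (simp add: eq_neg_iff_add_eq_0)
  moreover have "h k0 = u *s (c k0 *s h k0)" using u by simp
  ultimately have hk0: "h k0 = u *s - (\<Sum>k\<in>{..<m} - {k0}. c k *s h k)" by simp
  have "(\<Sum>k\<in>{..<m} - {k0}. c k *s h k) \<in> span (h ` ({..<m} - {k0}))"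
    by (intro span_sum span_scale span_base) auto
  then show ?thesis unfolding hk0 by (intro span_scale span_neg)
qed

end

lemma (in vector_space) independent_image_if_coefficients_zero:
  assumes P: "finite P" and H: "\<And>f. (\<Sum>p\<in>P. f p *s v p) = 0 \<Longrightarrow> \<forall>p\<in>P. f p = 0"
  shows "inj_on v P" "independent (v ` P)"
proof -
  show inj: "inj_on v P"
  proof (rule inj_onI, rule ccontr)
    fix p q assume pq: "p \<in> P" "q \<in> P" "v p = v q" and ne: "p \<noteq> q"
    define f where "f = (\<lambda>z. if z = p then 1 else if z = q then -1 else (0::'a))"
    have "(\<Sum>z\<in>P. f z *s v z) = (\<Sum>z\<in>{p, q}. f z *s v z)"
      by (rule sum.mono_neutral_right) (use P pq in \<open>auto simp: f_def\<close>)
    also have "\<dots> = 0" using ne pq(3) by (simp add: f_def)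
    finally have "f p = 0" using H pq(1) by blast
    then show False by (simp add: f_def)
  qed
  show "independent (v ` P)"
  proof (rule independent_if_scalars_zero)
    show "finite (v ` P)" using P by simp
    fix f y assume "(\<Sum>y\<in>v ` P. f y *s y) = 0" "y \<in> v ` P"
    then show "f y = 0" using H[of "f \<circ> v"] by (auto simp: sum.reindex[OF inj])
  qed
qed

section \<open>Determinants over commutative rings\<close>

lemma index_mult_mat_sum:
  assumes "A \<in> carrier_mat m k" "B \<in> carrier_mat k p" "i < m" "j < p"
  shows "(A * B) $$ (i, j) = (\<Sum>l<k. A $$ (i, l) * B $$ (l, j))"
  using assms by (simp add: scalar_prod_def atLeast0LessThan)

lemma det_eq_0_if_factors_through_lower_dim:
  fixes D C :: "nat \<Rightarrow> nat \<Rightarrow> 'a::comm_ring_1"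
  assumes "R < m"
  shows "det (mat m m (\<lambda>(i, j). \<Sum>l<R. D i l * C l j)) = 0"
proof -
  define D' where "D' = mat m m (\<lambda>(i, l). if l < R then D i l else 0)"
  define C' where "C' = mat m m (\<lambda>(l, j). if l < R then C l j else 0)"
  have D': "D' \<in> carrier_mat m m" and C': "C' \<in> carrier_mat m m" unfolding D'_def C'_def by auto
  have "mat m m (\<lambda>(i, j). \<Sum>l<R. D i l * C l j) = D' * C'"
  proof (rule eq_matI)
    fix i j assume "i < dim_row (D' * C')" "j < dim_col (D' * C')"
    then have ij: "i < m" "j < m" using D' C' by auto
    have "(D' * C') $$ (i, j) = (\<Sum>l<m. if l < R then D i l * C l j else 0)"
      using ij unfolding index_mult_mat_sum[OF D' C' ij] by (intro sum.cong) (auto simp: D'_def C'_def)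
    also have "\<dots> = (\<Sum>l<R. D i l * C l j)"
      using assms by (simp add: sum.If_cases Int_absorb1 lessThan_subset_iff[THEN iffD2] less_imp_le
          flip: Collect_conj_eq lessThan_def)
    finally show "mat m m (\<lambda>(i, j). \<Sum>l<R. D i l * C l j) $$ (i, j) = (D' * C') $$ (i, j)"
      using ij by simp
  qed (use D' C' in auto)
  moreover have "det D' = 0"
  proof -
    have "\<not> m - 1 < R" using assms by linarith
    then show ?thesis using laplace_expansion_column[OF D', of "m - 1"] assms by (simp add: D'_def)
  qed
  ultimately show ?thesis using det_mult[OF D' C'] by simp
qed

lemma dims_eq_if_inverse_and_inverse_under_hom:
  fixes C D :: "nat \<Rightarrow> nat \<Rightarrow> 'a::comm_ring_1" and \<pi> :: "'a \<Rightarrow> 'b::comm_ring_1"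
  assumes \<pi>: "comm_ring_hom \<pi>"
    and CD: "\<And>c l. c < R \<Longrightarrow> l < R \<Longrightarrow> (\<Sum>k<m. C c k * D k l) = (if c = l then 1 else 0)"
    and DC: "\<And>k j. k < m \<Longrightarrow> j < m \<Longrightarrow> \<pi> (\<Sum>l<R. D k l * C l j) = (if k = j then 1 else 0)"
  shows "m = R"
proof (rule ccontr)
  interpret \<pi>: comm_ring_hom \<pi> by (rule \<pi>)
  assume "m \<noteq> R"
  then consider "R < m" | "m < R" by linarith
  then show False
  proof cases
    case 1
    define X where "X = mat m m (\<lambda>(k, j). \<Sum>l<R. D k l * C l j)"
    have "map_mat \<pi> X = 1\<^sub>m m" unfolding X_def by (rule eq_matI) (auto simp: DC)
    then have "\<pi> (det X) = 1" using \<pi>.hom_det[of X] by simp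
    then show False using det_eq_0_if_factors_through_lower_dim[OF 1, of D C] by (simp add: X_def)
  next
    case 2
    have "mat R R (\<lambda>(c, l). \<Sum>k<m. C c k * D k l) = 1\<^sub>m R" by (rule eq_matI) (auto simp: CD)
    then show False using det_eq_0_if_factors_through_lower_dim[OF 2, of C D] by simp
  qed
qed

lemma det_dvd_1_if_right_inverse:
  fixes C D :: "nat \<Rightarrow> nat \<Rightarrow> 'a::comm_ring_1"
  assumes "\<And>c l. c < R \<Longrightarrow> l < R \<Longrightarrow> (\<Sum>k<R. C c k * D k l) = (if c = l then 1 else 0)"
  shows "det (mat R R (\<lambda>(k, l). D k l)) dvd 1"
proof -
  define Cm where "Cm = mat R R (\<lambda>(c, k). C c k)"
  define Dm where "Dm = mat R R (\<lambda>(k, l). D k l)"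
  have Cm: "Cm \<in> carrier_mat R R" and Dm: "Dm \<in> carrier_mat R R" by (simp_all add: Cm_def Dm_def)
  have "Cm * Dm = 1\<^sub>m R"
  proof (rule eq_matI)
    fix c l assume "c < dim_row (1\<^sub>m R)" "l < dim_col (1\<^sub>m R)"
    then have cl: "c < R" "l < R" by auto
    have "(Cm * Dm) $$ (c, l) = (\<Sum>k<R. C c k * D k l)"
      unfolding index_mult_mat_sum[OF Cm Dm cl] using cl by (intro sum.cong) (auto simp: Cm_def Dm_def)
    then show "(Cm * Dm) $$ (c, l) = 1\<^sub>m R $$ (c, l)" using assms[OF cl] cl by simp
  qed (use Cm Dm in auto)
  then have "det Cm * det Dm = 1" using det_mult[OF Cm Dm] by simp
  then show ?thesis unfolding Dm_def by (metis dvd_triv_right)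
qed

definition skip :: "nat \<Rightarrow> nat \<Rightarrow> nat" where
  "skip k j = (if j < k then j else Suc j)"

lemma skip_image: "skip k ` {..<m - 1} = {..<m} - {k}" if "k < m"
proof
  show "skip k ` {..<m - 1} \<subseteq> {..<m} - {k}" using that by (auto simp: skip_def)
  show "{..<m} - {k} \<subseteq> skip k ` {..<m - 1}"
  proof
    fix j assume "j \<in> {..<m} - {k}"
    then have "j = skip k (if j < k then j else j - 1)" "(if j < k then j else j - 1) < m - 1"
      using that by (auto simp: skip_def)
    then show "j \<in> skip k ` {..<m - 1}" by blast
  qed
qed

definition minor :: "'a::comm_ring_1 mat \<Rightarrow> nat \<Rightarrow> (nat \<Rightarrow> nat) \<Rightarrow> (nat \<Rightarrow> nat) \<Rightarrow> 'a" where
  "minor A t f h = det (mat t t (\<lambda>(i, j). A $$ (f i, h j)))"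

lemma minor_0 [simp]: "minor A 0 f h = 1"
proof -
  have "mat 0 0 (\<lambda>(i, j). A $$ (f i, h j)) = 1\<^sub>m 0" by (rule eq_matI) auto
  then show ?thesis unfolding minor_def by simp
qed

lemma minor_cong:
  "(\<And>i. i < t \<Longrightarrow> f i = f' i) \<Longrightarrow> (\<And>j. j < t \<Longrightarrow> h j = h' j) \<Longrightarrow> minor A t f h = minor A t f' h'"
  unfolding minor_def by (intro arg_cong[where f = det] eq_matI) auto

lemma minor_eq_0_if_det_eq_0:
  fixes A :: "'a::comm_ring_1 mat"
  assumes A: "A \<in> carrier_mat r r" and d: "det A = 0"
    and f: "\<And>i. i < r \<Longrightarrow> f i < r" and h: "\<And>j. j < r \<Longrightarrow> h j < r"
  shows "minor A r f h = 0"
proof -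
  define Pf where "Pf = mat r r (\<lambda>(i, l). if l = f i then 1 else (0::'a))"
  define Ph where "Ph = mat r r (\<lambda>(l, j). if l = h j then 1 else (0::'a))"
  have Pf: "Pf \<in> carrier_mat r r" and Ph: "Ph \<in> carrier_mat r r" unfolding Pf_def Ph_def by auto
  have PA: "Pf * A \<in> carrier_mat r r" using Pf A by auto
  have PfA: "(Pf * A) $$ (i, c) = A $$ (f i, c)" if "i < r" "c < r" for i c
  proof -
    have "(Pf * A) $$ (i, c) = (\<Sum>l<r. if l = f i then A $$ (l, c) else 0)"
      unfolding index_mult_mat_sum[OF Pf A that] using that by (intro sum.cong) (auto simp: Pf_def)
    then show ?thesis using f[OF that(1)] by simp
  qed
  have "mat r r (\<lambda>(i, j). A $$ (f i, h j)) = Pf * A * Ph"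
  proof (rule eq_matI)
    fix i j assume "i < dim_row (Pf * A * Ph)" "j < dim_col (Pf * A * Ph)"
    then have ij: "i < r" "j < r" using PA Ph by auto
    have "(Pf * A * Ph) $$ (i, j) = (\<Sum>c<r. if c = h j then A $$ (f i, c) else 0)"
      unfolding index_mult_mat_sum[OF PA Ph ij] using ij PfA by (intro sum.cong) (auto simp: Ph_def)
    then show "mat r r (\<lambda>(i, j). A $$ (f i, h j)) $$ (i, j) = (Pf * A * Ph) $$ (i, j)"
      using ij h[OF ij(2)] by simp
  qed (use PA Ph in auto)
  then show ?thesis unfolding minor_def using det_mult[OF PA Ph] det_mult[OF Pf A] d by simp
qed

lemma minor_Suc_last_column:
  "minor A (Suc t) f (h(t := c))
     = (\<Sum>i<Suc t. A $$ (f i, c) * ((-1) ^ (i + t) * minor A t (f \<circ> skip i) h))"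
proof -
  define Mc where "Mc = mat (Suc t) (Suc t) (\<lambda>(i, j). A $$ (f i, (h(t := c)) j))"
  have Mc: "Mc \<in> carrier_mat (Suc t) (Suc t)" unfolding Mc_def by auto
  have "minor A (Suc t) f (h(t := c)) = (\<Sum>i<Suc t. Mc $$ (i, t) * cofactor Mc i t)"
    unfolding minor_def Mc_def[symmetric] by (rule laplace_expansion_column[OF Mc]) simp
  also have "\<dots> = (\<Sum>i<Suc t. A $$ (f i, c) * ((-1) ^ (i + t) * minor A t (f \<circ> skip i) h))"
  proof (rule sum.cong[OF refl])
    fix i assume i: "i \<in> {..<Suc t}"
    have "mat_delete Mc i t = mat t t (\<lambda>(i', j). A $$ ((f \<circ> skip i) i', h j))"
      unfolding mat_delete_def by (rule eq_matI) (use i in \<open>auto simp: Mc_def skip_def\<close>)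
    then show "Mc $$ (i, t) * cofactor Mc i t = A $$ (f i, c) * ((-1) ^ (i + t) * minor A t (f \<circ> skip i) h)"
      using i unfolding cofactor_def minor_def by (simp add: Mc_def)
  qed
  finally show ?thesis .
qed

lemma left_null_vector_if_bordered_minors_vanish:
  fixes A :: "'a::comm_ring_1 mat"
  assumes f: "\<And>i. i < Suc t \<Longrightarrow> f i < r" and new: "\<And>i. i < t \<Longrightarrow> f i \<noteq> f t"
    and vanish: "\<And>c. c < r \<Longrightarrow> minor A (Suc t) f (h(t := c)) = 0"
    and nz: "minor A t f h \<noteq> 0"
  obtains v where "\<And>c. c < r \<Longrightarrow> (\<Sum>l<r. v l * A $$ (l, c)) = 0" "v (f t) \<noteq> 0"
proof -
  (* v is the row of signed cofactors of the last column of the bordered minor. *)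
  define cof where "cof i = (-1) ^ (i + t) * minor A t (f \<circ> skip i) h" for i
  define v where "v l = (\<Sum>i<Suc t. if f i = l then cof i else 0)" for l
  have "(\<Sum>l<r. v l * A $$ (l, c)) = 0" if c: "c < r" for c
  proof -
    have "(\<Sum>l<r. v l * A $$ (l, c)) = (\<Sum>i<Suc t. \<Sum>l<r. if f i = l then cof i * A $$ (l, c) else 0)"
      unfolding v_def sum_distrib_right by (subst sum.swap) (auto intro!: sum.cong)
    also have "\<dots> = (\<Sum>i<Suc t. A $$ (f i, c) * cof i)"
      using f by (intro sum.cong refl) (simp add: mult.commute)
    also have "\<dots> = 0"
      using vanish[OF c] unfolding minor_Suc_last_column cof_def by simp
    finally show ?thesis .
  qed
  moreover have "v (f t) = cof t"
    unfolding v_def using new by (subst sum.mono_neutral_right[of _ "{t}"]) (auto simp: less_Suc_eq)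
  moreover have "minor A t (f \<circ> skip t) h = minor A t f h"
    by (rule minor_cong) (auto simp: skip_def)
  then have "cof t = minor A t f h"
    unfolding cof_def by (simp flip: mult_2)
  ultimately show ?thesis using nz by (intro that[of v]) auto
qed

lemma det_eq_0_obtains_left_null_vector:
  fixes A :: "'a::comm_ring_1 mat"
  assumes A: "A \<in> carrier_mat r r" and d: "det A = 0"
  obtains v where "\<And>c. c < r \<Longrightarrow> (\<Sum>l<r. v l * A $$ (l, c)) = 0" "\<exists>l<r. v l \<noteq> 0"
proof -
  (* Take a nonzero minor of maximal size t < r and border it by a new row f' t. *)
  define P where "P t \<longleftrightarrow> (\<exists>f h. (\<forall>i<t. f i < r) \<and> (\<forall>j<t. h j < r) \<and> inj_on f {..<t}
      \<and> minor A t f h \<noteq> 0)" for t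
  have bounded: "t \<le> r" if "P t" for t
  proof -
    from that obtain f where "\<forall>i<t. f i < r" "inj_on f {..<t}" unfolding P_def by blast
    then show ?thesis using card_inj_on_le[of f "{..<t}" "{..<r}"] by auto
  qed
  define t where "t = (GREATEST t. P t)"
  have "P 0" unfolding P_def by auto
  then have Pt: "P t" and maximal: "\<And>s. P s \<Longrightarrow> s \<le> t"
    unfolding t_def using bounded by (blast intro: GreatestI_nat Greatest_le_nat)+
  from Pt obtain f h where f: "\<forall>i<t. f i < r" "inj_on f {..<t}" and h: "\<forall>j<t. h j < r"
    and nz: "minor A t f h \<noteq> 0" unfolding P_def by blast
  have "t \<noteq> r" using minor_eq_0_if_det_eq_0[OF A d, of f h] f h nz by auto
  with bounded[OF Pt] have "t < r" by simp
  then have "card (f ` {..<t}) < card {..<r}" using card_image_le[of "{..<t}" f] by simp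
  then have "\<not> {..<r} \<subseteq> f ` {..<t}" using card_mono[of "f ` {..<t}" "{..<r}"] by auto
  then obtain i0 where i0: "i0 < r" "i0 \<notin> f ` {..<t}" by blast
  define f' where "f' = f(t := i0)"
  have f': "\<And>i. i < Suc t \<Longrightarrow> f' i < r" "inj_on f' {..<Suc t}" "\<And>i. i < t \<Longrightarrow> f' i \<noteq> f' t"
    using f i0 by (auto simp: f'_def less_Suc_eq inj_on_def lessThan_Suc)
  have "minor A (Suc t) f' (h(t := c)) = 0" if c: "c < r" for c
  proof (rule ccontr)
    assume "minor A (Suc t) f' (h(t := c)) \<noteq> 0"
    then have "P (Suc t)" unfolding P_def using f' h c by (intro exI[of _ f'] exI[of _ "h(t := c)"]) auto
    with maximal show False by fastforce
  qed
  moreover have "minor A t f' h \<noteq> 0" using nz minor_cong[of t f' f h h A] by (simp add: f'_def)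
  ultimately obtain v where "\<And>c. c < r \<Longrightarrow> (\<Sum>l<r. v l * A $$ (l, c)) = 0" "v (f' t) \<noteq> 0"
    using left_null_vector_if_bordered_minors_vanish[where f=f' and A=A and h=h, OF f'(1) f'(3)] by metis
  then show ?thesis using that i0 by (auto simp: f'_def)
qed

context Modules.module
begin

lemma det_ne_0_if_independent_family:
  fixes r :: nat
  assumes g: "independent_family (*s) r g" and a: "\<And>i. i < r \<Longrightarrow> g i = (\<Sum>c<r. a i c *s b c)"
  shows "det (mat r r (\<lambda>(i, c). a i c)) \<noteq> 0"
proof
  assume "det (mat r r (\<lambda>(i, c). a i c)) = 0"
  then obtain v where v0: "\<And>c. c < r \<Longrightarrow> (\<Sum>i<r. v i * mat r r (\<lambda>(i, c). a i c) $$ (i, c)) = 0"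
    and "\<exists>i<r. v i \<noteq> 0"
    using det_eq_0_obtains_left_null_vector[OF mat_carrier] by blast
  have v: "(\<Sum>i<r. v i * a i c) = 0" if "c < r" for c
  proof -
    have "(\<Sum>i<r. v i * a i c) = (\<Sum>i<r. v i * mat r r (\<lambda>(i, c). a i c) $$ (i, c))"
      using that by (intro sum.cong) auto
    then show ?thesis using v0[OF that] by simp
  qed
  have "(\<Sum>i<r. v i *s g i) = (\<Sum>c<r. (\<Sum>i<r. v i * a i c) *s b c)"
    using a by (simp add: sum_scale_combination[symmetric])
  also have "\<dots> = 0" using v by simp
  finally show False using independent_familyD[OF g] \<open>\<exists>i<r. v i \<noteq> 0\<close> by blast
qed

lemma span_if_det_unit:
  fixes r :: nat
  assumes u: "det (mat r r (\<lambda>(i, c). a i c)) dvd 1"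
    and a: "\<And>i. i < r \<Longrightarrow> g i = (\<Sum>c<r. a i c *s b c)"
  shows "b ` {..<r} \<subseteq> span (g ` {..<r})"
proof clarify
  fix c assume c: "c < r"
  define A where "A = mat r r (\<lambda>(i, c). a i c)"
  have A: "A \<in> carrier_mat r r" unfolding A_def by simp
  from u obtain w where w: "1 = det A * w" unfolding A_def by (rule dvdE)
  have adj: "(\<Sum>i<r. adj_mat A $$ (c, i) * a i l) = (if c = l then det A else 0)" if l: "l < r" for l
  proof -
    have "(\<Sum>i<r. adj_mat A $$ (c, i) * a i l) = (adj_mat A * A) $$ (c, l)"
      unfolding index_mult_mat_sum[OF adj_mat(1)[OF A] A c l] using l by (intro sum.cong) (auto simp: A_def)
    then show ?thesis using adj_mat(3)[OF A] c l by simp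
  qed
  have "(\<Sum>i<r. adj_mat A $$ (c, i) *s g i) = (\<Sum>l<r. (\<Sum>i<r. adj_mat A $$ (c, i) * a i l) *s b l)"
    using a by (simp add: sum_scale_combination[symmetric])
  also have "\<dots> = det A *s b c"
    using c by (simp add: adj if_distrib[of "\<lambda>x. x *s _"] cong: if_cong)
  finally have bc: "b c = w *s (\<Sum>i<r. adj_mat A $$ (c, i) *s g i)" using w by (simp add: mult.commute)
  have "(\<Sum>i<r. adj_mat A $$ (c, i) *s g i) \<in> span (g ` {..<r})"
    by (intro span_sum span_scale span_base) auto
  then show "b c \<in> span (g ` {..<r})" unfolding bc by (rule span_scale)
qed

lemma independent_family_if_det_unit:
  fixes r :: nat
  assumes u: "det (mat r r (\<lambda>(i, c). a i c)) dvd 1"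
    and a: "\<And>i. i < r \<Longrightarrow> g i = (\<Sum>c<r. a i c *s b c)" and b: "independent_family (*s) r b"
  shows "independent_family (*s) r g"
  unfolding independent_family_def
proof (intro allI impI)
  fix v k assume rel: "(\<Sum>i<r. v i *s g i) = 0" and k: "k < r"
  define A where "A = mat r r (\<lambda>(i, c). a i c)"
  have A: "A \<in> carrier_mat r r" unfolding A_def by simp
  from u obtain w where w: "1 = det A * w" unfolding A_def by (rule dvdE)
  have "(\<Sum>c<r. (\<Sum>i<r. v i * a i c) *s b c) = 0"
    using rel a by (simp add: sum_scale_combination[symmetric])
  from independent_familyD[OF b this] have va: "(\<Sum>i<r. v i * a i c) = 0" if "c < r" for c
    using that by simp
  have adj: "(\<Sum>c<r. a i c * adj_mat A $$ (c, k)) = (if i = k then det A else 0)" if i: "i < r" for i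
  proof -
    have "(\<Sum>c<r. a i c * adj_mat A $$ (c, k)) = (A * adj_mat A) $$ (i, k)"
      unfolding index_mult_mat_sum[OF A adj_mat(1)[OF A] i k] using i by (intro sum.cong) (auto simp: A_def)
    then show ?thesis using adj_mat(2)[OF A] i k by simp
  qed
  have "v k * det A = (\<Sum>i<r. if i = k then v i * det A else 0)"
    using k by simp
  also have "\<dots> = (\<Sum>i<r. v i * (\<Sum>c<r. a i c * adj_mat A $$ (c, k)))"
    by (intro sum.cong refl) (simp add: adj)
  also have "\<dots> = (\<Sum>i<r. \<Sum>c<r. v i * a i c * adj_mat A $$ (c, k))"
    by (simp add: sum_distrib_left mult.assoc)
  also have "\<dots> = (\<Sum>c<r. (\<Sum>i<r. v i * a i c) * adj_mat A $$ (c, k))"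
    by (subst sum.swap) (simp add: sum_distrib_right)
  also have "\<dots> = 0" using va by simp
  finally have "v k * det A = 0" .
  then show "v k = 0" using w by (metis mult.assoc mult_1_right mult_zero_left)
qed

end

section \<open>Graded algebras and modules\<close>

definition hcomp :: "(nat \<Rightarrow> 'm::ab_group_add set) \<Rightarrow> 'm \<Rightarrow> nat \<Rightarrow> 'm" where
  "hcomp G y = (THE c. (\<forall>i. c i \<in> G i) \<and> finite {i. c i \<noteq> 0} \<and> y = (\<Sum>i\<in>{i. c i \<noteq> 0}. c i))"

locale graded_group =
  fixes G :: "nat \<Rightarrow> 'm::ab_group_add set"
  assumes graded: "graded_decomposition G"
begin

lemma zero_in: "0 \<in> G i"
  using graded unfolding graded_decomposition_def by blast

lemma add_in: "x \<in> G i \<Longrightarrow> y \<in> G i \<Longrightarrow> x + y \<in> G i"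
  using graded unfolding graded_decomposition_def by blast

lemma uminus_in: "x \<in> G i \<Longrightarrow> - x \<in> G i"
  using graded unfolding graded_decomposition_def by blast

lemma sum_in: "(\<And>l. l \<in> L \<Longrightarrow> f l \<in> G i) \<Longrightarrow> (\<Sum>l\<in>L. f l) \<in> G i"
  by (induction L rule: infinite_finite_induct) (auto simp: zero_in add_in)

lemma hcomp_decomposition:
  "(\<forall>i. hcomp G y i \<in> G i) \<and> finite {i. hcomp G y i \<noteq> 0} \<and> y = (\<Sum>i\<in>{i. hcomp G y i \<noteq> 0}. hcomp G y i)"
proof -
  from graded have "\<exists>!c. (\<forall>i. c i \<in> G i) \<and> finite {i. c i \<noteq> 0} \<and> y = (\<Sum>i\<in>{i. c i \<noteq> 0}. c i)"
    unfolding graded_decomposition_def by blast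
  then show ?thesis unfolding hcomp_def by (rule theI')
qed

lemma hcomp_in: "hcomp G y i \<in> G i"
  using hcomp_decomposition by blast

lemma finite_hcomp_support: "finite {i. hcomp G y i \<noteq> 0}"
  using hcomp_decomposition by blast

lemma sum_hcomp:
  assumes "finite S" "{i. hcomp G y i \<noteq> 0} \<subseteq> S"
  shows "(\<Sum>i\<in>S. hcomp G y i) = y"
proof -
  have "(\<Sum>i\<in>S. hcomp G y i) = (\<Sum>i\<in>{i. hcomp G y i \<noteq> 0}. hcomp G y i)"
    by (rule sum.mono_neutral_right) (use assms in auto)
  also have "\<dots> = y" using hcomp_decomposition by metis
  finally show ?thesis .
qed

lemma hcomp_unique:
  assumes c: "\<And>i. c i \<in> G i" and S: "finite S" "\<And>i. i \<notin> S \<Longrightarrow> c i = 0"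
    and y: "y = (\<Sum>i\<in>S. c i)"
  shows "hcomp G y = c"
proof -
  have fin: "finite {i. c i \<noteq> 0}" using S by (metis (mono_tags) mem_Collect_eq rev_finite_subset subsetI)
  have "y = (\<Sum>i\<in>{i. c i \<noteq> 0}. c i)"
    unfolding y by (rule sum.mono_neutral_right) (use S in auto)
  moreover from graded have "\<exists>!c. (\<forall>i. c i \<in> G i) \<and> finite {i. c i \<noteq> 0} \<and> y = (\<Sum>i\<in>{i. c i \<noteq> 0}. c i)"
    unfolding graded_decomposition_def by blast
  ultimately show ?thesis using c fin hcomp_decomposition[of y] by blast
qed

lemma hcomp_homogeneous: "y \<in> G k \<Longrightarrow> hcomp G y = (\<lambda>i. if i = k then y else 0)"
  by (rule hcomp_unique[where S="{k}"]) (auto simp: zero_in)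

lemma hcomp_zero [simp]: "hcomp G 0 i = 0"
  using hcomp_homogeneous[OF zero_in[of 0]] by simp

lemma hcomp_add: "hcomp G (y + z) i = hcomp G y i + hcomp G z i"
proof -
  let ?S = "{i. hcomp G y i \<noteq> 0} \<union> {i. hcomp G z i \<noteq> 0}"
  have S: "finite ?S" using finite_hcomp_support by auto
  have "hcomp G (y + z) = (\<lambda>i. hcomp G y i + hcomp G z i)"
  proof (rule hcomp_unique[where S="?S"])
    show "y + z = (\<Sum>i\<in>?S. hcomp G y i + hcomp G z i)"
      using sum_hcomp[OF S, of y] sum_hcomp[OF S, of z] by (auto simp: sum.distrib)
  qed (use S in \<open>auto intro: add_in hcomp_in\<close>)
  then show ?thesis by simp
qed

lemma hcomp_sum: "hcomp G (\<Sum>l\<in>L. f l) i = (\<Sum>l\<in>L. hcomp G (f l) i)"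
  by (induction L rule: infinite_finite_induct) (auto simp: hcomp_add)

lemma hcomp_diff: "hcomp G (y - z) i = hcomp G y i - hcomp G z i"
  using hcomp_add[of "y - z" z i] by (simp add: algebra_simps)

lemma hcomp_sum_homogeneous:
  assumes "\<And>l. l \<in> L \<Longrightarrow> f l \<in> G (\<delta> l)" "finite L"
  shows "hcomp G (\<Sum>l\<in>L. f l) i = (\<Sum>l\<in>{l\<in>L. \<delta> l = i}. f l)"
proof -
  have "hcomp G (\<Sum>l\<in>L. f l) i = (\<Sum>l\<in>L. if \<delta> l = i then f l else 0)"
    unfolding hcomp_sum by (intro sum.cong refl) (simp add: hcomp_homogeneous[OF assms(1)])
  also have "\<dots> = (\<Sum>l\<in>{l\<in>L. \<delta> l = i}. f l)"
    using assms(2) by (simp add: sum.inter_filter)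
  finally show ?thesis .
qed

end

locale connected_graded =
  fixes phi :: "'k::field \<Rightarrow> 'a::comm_ring_1" and Agr :: "nat \<Rightarrow> 'a set"
  assumes connected: "connected_graded_algebra phi Agr"
begin

sublocale A: graded_group Agr
  using connected unfolding connected_graded_algebra_def by unfold_locales blast

lemma mult_in: "a \<in> Agr i \<Longrightarrow> b \<in> Agr j \<Longrightarrow> a * b \<in> Agr (i + j)"
  using connected unfolding connected_graded_algebra_def by blast

lemma Agr_0: "Agr 0 = range phi"
  using connected unfolding connected_graded_algebra_def by blast

lemma phi_add: "phi (c + d) = phi c + phi d"
  and phi_mult: "phi (c * d) = phi c * phi d"
  and phi_one: "phi 1 = 1"
  using connected unfolding connected_graded_algebra_def by blast+

lemma phi_zero: "phi 0 = 0"
  using phi_add[of 0 0] by simp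

lemma phi_in_Agr_0: "phi c \<in> Agr 0"
  using Agr_0 by auto

lemma one_in_Agr_0: "1 \<in> Agr 0"
  using phi_in_Agr_0[of 1] by (simp add: phi_one)

lemma dvd_one_if_in_Agr_0:
  assumes "a \<in> Agr 0" "a \<noteq> 0"
  shows "a dvd 1"
proof -
  obtain c where c: "a = phi c" using assms(1) Agr_0 by auto
  with assms(2) have "c \<noteq> 0" by (auto simp: phi_zero)
  then have "1 = a * phi (inverse c)" unfolding c by (simp flip: phi_mult phi_one)
  then show ?thesis by (rule dvdI)
qed

lemma prod_in: "(\<And>j. j \<in> J \<Longrightarrow> f j \<in> Agr (\<delta> j)) \<Longrightarrow> prod f J \<in> Agr (\<Sum>j\<in>J. \<delta> j)"
proof (induction J rule: infinite_finite_induct)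
  case (insert j J)
  then show ?case using mult_in[of "f j" "\<delta> j" "prod f J" "sum \<delta> J"] by simp
qed (auto simp: one_in_Agr_0)

lemma power_in: "a \<in> Agr i \<Longrightarrow> a ^ k \<in> Agr (i * k)"
  using prod_in[of "{..<k}" "\<lambda>_. a" "\<lambda>_. i"] by (simp add: mult.commute)

lemma prod_permutation_in_Agr_0:
  fixes r :: nat
  assumes p: "p permutes {..<r}"
    and a: "\<And>i c. i < r \<Longrightarrow> c < r \<Longrightarrow> a i c \<in> Agr (d i - \<beta> c)"
    and a0: "\<And>i c. i < r \<Longrightarrow> c < r \<Longrightarrow> d i < \<beta> c \<Longrightarrow> a i c = 0"
    and sums: "(\<Sum>i<r. d i) = (\<Sum>c<r. \<beta> c)"
  shows "(\<Prod>i<r. a i (p i)) \<in> Agr 0"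
proof (cases "\<exists>i<r. d i < \<beta> (p i)")
  case True
  then obtain i where "i < r" "a i (p i) = 0" using a0 p by (meson lessThan_iff permutes_in_image)
  then have "(\<Prod>i<r. a i (p i)) = 0" by (intro prod_zero) auto
  then show ?thesis by (simp add: A.zero_in)
next
  case False
  have pr: "p i < r" if "i < r" for i using permutes_in_image[OF p, of i] that by simp
  have "(\<Sum>i<r. d i - \<beta> (p i)) + (\<Sum>i<r. \<beta> (p i)) = (\<Sum>i<r. d i)"
    using False by (auto simp flip: sum.distrib intro!: sum.cong)
  moreover have "(\<Sum>i<r. \<beta> (p i)) = (\<Sum>i<r. \<beta> i)"
    using sum.permute[OF p, of \<beta>] by (simp add: comp_def)
  ultimately have "(\<Sum>i<r. d i - \<beta> (p i)) = 0" using sums by simp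
  with prod_in[of "{..<r}" "\<lambda>i. a i (p i)" "\<lambda>i. d i - \<beta> (p i)"] show ?thesis
    using a pr by simp
qed

lemma det_in_Agr_0:
  assumes a: "\<And>i c. i < r \<Longrightarrow> c < r \<Longrightarrow> a i c \<in> Agr (d i - \<beta> c)"
    and a0: "\<And>i c. i < r \<Longrightarrow> c < r \<Longrightarrow> d i < \<beta> c \<Longrightarrow> a i c = 0"
    and sums: "(\<Sum>i<r. d i) = (\<Sum>c<r. \<beta> c)"
  shows "det (mat r r (\<lambda>(i, c). a i c)) \<in> Agr 0"
proof -
  have "det (mat r r (\<lambda>(i, c). a i c)) = (\<Sum>p\<in>{p. p permutes {..<r}}. signof p * (\<Prod>i<r. a i (p i)))"
    by (subst det_def'[of _ r]) (auto simp: atLeast0LessThan permutes_in_image intro!: sum.cong prod.cong)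
  also have "\<dots> \<in> Agr 0"
  proof (rule A.sum_in)
    fix p assume "p \<in> {p. p permutes {..<r}}"
    moreover have "(signof p :: 'a) \<in> Agr 0"
      by (cases p rule: sign_cases) (simp_all add: one_in_Agr_0 A.uminus_in)
    ultimately show "signof p * (\<Prod>i<r. a i (p i)) \<in> Agr 0"
      using mult_in prod_permutation_in_Agr_0[OF _ a a0 sums] by fastforce
  qed
  finally show ?thesis .
qed

end

locale graded_module_over = connected_graded phi Agr
  for phi :: "'k::field \<Rightarrow> 'a::comm_ring_1" and Agr +
  fixes sm :: "'a \<Rightarrow> 'm::ab_group_add \<Rightarrow> 'm" and Mgr :: "nat \<Rightarrow> 'm set"
  assumes graded_module: "graded_module Agr sm Mgr"
begin

sublocale M: Modules.module sm
  using graded_module unfolding graded_module_def by blast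

sublocale MG: graded_group Mgr
  using graded_module unfolding graded_module_def by unfold_locales blast

lemma scale_in: "a \<in> Agr i \<Longrightarrow> m \<in> Mgr j \<Longrightarrow> sm a m \<in> Mgr (i + j)"
  using graded_module unfolding graded_module_def by blast

sublocale V: vector_space "\<lambda>c m. sm (phi c) m"
  unfolding vector_space_def
  by (simp add: phi_add phi_mult phi_one M.scale_right_distrib M.scale_left_distrib)

lemma hcomp_scale_homogeneous:
  assumes m: "m \<in> Mgr l"
  shows "hcomp Mgr (sm a m) i = (if l \<le> i then sm (hcomp Agr a (i - l)) m else 0)"
proof -
  let ?S = "insert (i - l) {j. hcomp Agr a j \<noteq> 0}"
  have S: "finite ?S" using A.finite_hcomp_support by simp
  have "(\<Sum>j\<in>?S. hcomp Agr a j) = a" by (rule A.sum_hcomp[OF S]) auto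
  then have "sm a m = (\<Sum>j\<in>?S. sm (hcomp Agr a j) m)" by (metis M.scale_sum_left)
  then have "hcomp Mgr (sm a m) i = (\<Sum>j\<in>{j\<in>?S. j + l = i}. sm (hcomp Agr a j) m)"
    using MG.hcomp_sum_homogeneous[of ?S "\<lambda>j. sm (hcomp Agr a j) m" "\<lambda>j. j + l" i]
      scale_in[OF A.hcomp_in m] S by simp
  also have "\<dots> = (if l \<le> i then sm (hcomp Agr a (i - l)) m else 0)"
  proof (cases "l \<le> i")
    case True
    then have "{j\<in>?S. j + l = i} = {i - l}" by auto
    then show ?thesis using True by simp
  next
    case False
    then have "{j\<in>?S. j + l = i} = {}" by auto
    then show ?thesis using False by simp
  qed
  finally show ?thesis .
qed

definition homogeneous_family :: "nat \<Rightarrow> (nat \<Rightarrow> 'm) \<Rightarrow> (nat \<Rightarrow> nat) \<Rightarrow> bool" where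
  "homogeneous_family R b \<beta> \<longleftrightarrow> (\<forall>j<R. b j \<in> Mgr (\<beta> j))"

definition homogeneous_basis :: "nat \<Rightarrow> (nat \<Rightarrow> 'm) \<Rightarrow> (nat \<Rightarrow> nat) \<Rightarrow> bool" where
  "homogeneous_basis R b \<beta> \<longleftrightarrow>
     homogeneous_family R b \<beta> \<and> independent_family sm R b \<and> M.span (b ` {..<R}) = UNIV"

lemma hcomp_combination:
  assumes "homogeneous_family R b \<beta>"
  shows "hcomp Mgr (\<Sum>j<R. sm (a j) (b j)) i
    = (\<Sum>j<R. sm (if \<beta> j \<le> i then hcomp Agr (a j) (i - \<beta> j) else 0) (b j))"
  unfolding MG.hcomp_sum
proof (intro sum.cong refl)
  fix j assume "j \<in> {..<R}"
  then have "b j \<in> Mgr (\<beta> j)" using assms unfolding homogeneous_family_def by blast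
  then show "hcomp Mgr (sm (a j) (b j)) i = sm (if \<beta> j \<le> i then hcomp Agr (a j) (i - \<beta> j) else 0) (b j)"
    by (simp add: hcomp_scale_homogeneous)
qed

end

context connected_graded
begin

lemma graded_module_over_self: "graded_module_over phi Agr (*) Agr"
proof unfold_locales
  have "Modules.module ((*) :: 'a \<Rightarrow> 'a \<Rightarrow> 'a)" by unfold_locales (auto simp: algebra_simps)
  then show "graded_module Agr (*) Agr"
    unfolding graded_module_def using A.graded mult_in by blast
qed

lemma hcomp_0_mult: "hcomp Agr (a * b) 0 = hcomp Agr a 0 * hcomp Agr b 0"
proof -
  interpret self: graded_module_over phi Agr "(*)" Agr by (rule graded_module_over_self)
  let ?S = "insert 0 {l. hcomp Agr b l \<noteq> 0}"
  have S: "finite ?S" using A.finite_hcomp_support by simp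
  have "(\<Sum>l\<in>?S. hcomp Agr b l) = b" by (rule A.sum_hcomp[OF S]) auto
  then have "hcomp Agr (a * b) 0 = (\<Sum>l\<in>?S. hcomp Agr (a * hcomp Agr b l) 0)"
    by (metis A.hcomp_sum sum_distrib_left)
  also have "\<dots> = (\<Sum>l\<in>?S. if l = 0 then hcomp Agr a 0 * hcomp Agr b l else 0)"
    by (intro sum.cong refl) (simp add: self.hcomp_scale_homogeneous[OF A.hcomp_in])
  also have "\<dots> = hcomp Agr a 0 * hcomp Agr b 0" using S by simp
  finally show ?thesis .
qed

lemma comm_ring_hom_hcomp_0: "comm_ring_hom (\<lambda>a. hcomp Agr a 0)"
  by unfold_locales (simp_all add: A.hcomp_add hcomp_0_mult A.hcomp_homogeneous[OF one_in_Agr_0])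

end

section \<open>Homogeneous bases\<close>

context graded_module_over
begin

lemma homogeneous_generators_exist:
  assumes S: "finite S" "M.span S = UNIV"
  obtains m h \<delta> where "homogeneous_family m h \<delta>" "M.span (h ` {..<m}) = UNIV"
proof -
  define H where "H = (\<lambda>(s, i). hcomp Mgr s i) ` (SIGMA s:S. {i. hcomp Mgr s i \<noteq> 0})"
  have H: "finite H"
    unfolding H_def by (intro finite_imageI finite_SigmaI S(1) MG.finite_hcomp_support)
  have "s \<in> M.span H" if s: "s \<in> S" for s
  proof -
    have "hcomp Mgr s i \<in> H" if "hcomp Mgr s i \<noteq> 0" for i
      unfolding H_def using s that by (intro rev_image_eqI[of "(s, i)"]) auto
    then have "(\<Sum>i\<in>{i. hcomp Mgr s i \<noteq> 0}. hcomp Mgr s i) \<in> M.span H"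
      by (intro M.span_sum M.span_base) simp
    then show ?thesis by (simp add: MG.sum_hcomp[OF MG.finite_hcomp_support order_refl])
  qed
  then have "M.span H = UNIV" by (intro M.span_eq_UNIV_if_subset_span[OF _ S(2)]) auto
  obtain h where h: "bij_betw h {..<card H} H"
    using ex_bij_betw_nat_finite[OF H] by (auto simp: atLeast0LessThan)
  then have image: "h ` {..<card H} = H" by (simp add: bij_betw_def)
  have "\<exists>i. h k \<in> Mgr i" if "k < card H" for k
  proof -
    have "h k \<in> H" using image that by blast
    then obtain s i where "h k = hcomp Mgr s i" unfolding H_def by auto
    then show ?thesis by (intro exI[of _ i]) (simp add: MG.hcomp_in)
  qed
  then have "homogeneous_family (card H) h (\<lambda>k. SOME i. h k \<in> Mgr i)"
    unfolding homogeneous_family_def by (auto intro: someI_ex)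
  from that[OF this] show ?thesis using \<open>M.span H = UNIV\<close> image by simp
qed

lemma shorter_generating_family:
  assumes h: "homogeneous_family m h \<delta>" "M.span (h ` {..<m}) = UNIV"
    and rel: "(\<Sum>k<m. sm (lam k) (h k)) = 0" and k0: "k0 < m" "hcomp Agr (lam k0) 0 \<noteq> 0"
  shows "homogeneous_family (m - 1) (h \<circ> skip k0) (\<delta> \<circ> skip k0)"
    and "M.span ((h \<circ> skip k0) ` {..<m - 1}) = UNIV"
proof -
  show "homogeneous_family (m - 1) (h \<circ> skip k0) (\<delta> \<circ> skip k0)"
    using h(1) skip_image[OF k0(1)] unfolding homogeneous_family_def by auto
  (* In degree \<delta> k0 the relation has the nonzero scalar hcomp Agr (lam k0) 0 as coefficient of h k0. *)
  define c where "c k = (if \<delta> k \<le> \<delta> k0 then hcomp Agr (lam k) (\<delta> k0 - \<delta> k) else 0)" for k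
  have "(\<Sum>k<m. sm (c k) (h k)) = 0"
    using hcomp_combination[OF h(1), of lam "\<delta> k0"] rel by (simp add: c_def)
  moreover obtain u where "u * c k0 = 1"
    using dvd_one_if_in_Agr_0[OF A.hcomp_in k0(2)] by (auto simp: c_def mult.commute elim: dvdE)
  ultimately have "h k0 \<in> M.span (h ` ({..<m} - {k0}))" by (rule M.span_if_unit_coefficient[OF _ _ k0(1)])
  then have "h ` {..<m} \<subseteq> M.span (h ` ({..<m} - {k0}))" by (auto intro: M.span_base)
  moreover have "(h \<circ> skip k0) ` {..<m - 1} = h ` ({..<m} - {k0})"
    unfolding image_comp[symmetric] skip_image[OF k0(1)] ..
  ultimately show "M.span ((h \<circ> skip k0) ` {..<m - 1}) = UNIV"
    using M.span_eq_UNIV_if_subset_span[OF _ h(2)] by simp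
qed

lemma minimal_generating_family_exists:
  assumes "finite S" "M.span S = UNIV"
  obtains m h \<delta> where "homogeneous_family m h \<delta>" "M.span (h ` {..<m}) = UNIV"
    "\<And>lam k. (\<Sum>k<m. sm (lam k) (h k)) = 0 \<Longrightarrow> k < m \<Longrightarrow> hcomp Agr (lam k) 0 = 0"
proof -
  define Q where "Q m \<longleftrightarrow> (\<exists>h \<delta>. homogeneous_family m h \<delta> \<and> M.span (h ` {..<m}) = UNIV)" for m
  define m where "m = (LEAST m. Q m)"
  obtain m0 h0 \<delta>0 where "homogeneous_family m0 h0 \<delta>0" "M.span (h0 ` {..<m0}) = UNIV"
    using homogeneous_generators_exist[OF assms] .
  then have "Q m0" unfolding Q_def by blast
  then have "Q m" unfolding m_def by (rule LeastI)
  then obtain h \<delta> where h: "homogeneous_family m h \<delta>" "M.span (h ` {..<m}) = UNIV"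
    unfolding Q_def by blast
  have "hcomp Agr (lam k) 0 = 0" if "(\<Sum>k<m. sm (lam k) (h k)) = 0" "k < m" for lam k
  proof (rule ccontr)
    assume "hcomp Agr (lam k) 0 \<noteq> 0"
    from shorter_generating_family[OF h that this] have "Q (m - 1)" unfolding Q_def by blast
    then have "m \<le> m - 1" unfolding m_def by (rule Least_le)
    with \<open>k < m\<close> show False by simp
  qed
  with h that show ?thesis by blast
qed

lemma independent_if_minimal_generating_family:
  assumes h: "M.span (h ` {..<m}) = UNIV"
    and minimal: "\<And>lam k. (\<Sum>k<m. sm (lam k) (h k)) = 0 \<Longrightarrow> k < m \<Longrightarrow> hcomp Agr (lam k) 0 = 0"
    and b: "independent_family sm R b" "M.span (b ` {..<R}) = UNIV"
  shows "independent_family sm m h"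
proof -
  (* C D = 1 exactly, while D C = 1 holds only modulo the irrelevant ideal, by minimality. *)
  obtain D where D: "\<And>k. h k = (\<Sum>l<R. sm (D k l) (b l))" using M.span_UNIV_obtains_coefficients[OF b(2)] by blast
  obtain C where C: "\<And>l. b l = (\<Sum>k<m. sm (C l k) (h k))" using M.span_UNIV_obtains_coefficients[OF h] by blast
  have CD: "(\<Sum>k<m. C c k * D k l) = (if c = l then 1 else 0)" if "c < R" "l < R" for c l
  proof (rule M.independent_family_unique[OF b(1) _ that(2)])
    have "(\<Sum>l<R. sm (\<Sum>k<m. C c k * D k l) (b l)) = b c"
      by (simp add: M.sum_scale_combination[symmetric] D[symmetric] C[symmetric])
    also have "\<dots> = (\<Sum>l<R. sm (if c = l then 1 else 0) (b l))"
      using that by (simp add: if_distrib[of "\<lambda>z. sm z _"] cong: if_cong)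
    finally show "(\<Sum>l<R. sm (\<Sum>k<m. C c k * D k l) (b l)) = (\<Sum>l<R. sm (if c = l then 1 else 0) (b l))" .
  qed
  have DC: "hcomp Agr (\<Sum>l<R. D k l * C l j) 0 = (if k = j then 1 else 0)" if "k < m" "j < m" for k j
  proof -
    have "(\<Sum>j<m. sm (\<Sum>l<R. D k l * C l j) (h j)) = h k"
      by (simp add: M.sum_scale_combination[symmetric] D[symmetric] C[symmetric])
    also have "\<dots> = (\<Sum>j<m. sm (if k = j then 1 else 0) (h j))"
      using that by (simp add: if_distrib[of "\<lambda>z. sm z _"] cong: if_cong)
    finally have "(\<Sum>j<m. sm ((\<Sum>l<R. D k l * C l j) - (if k = j then 1 else 0)) (h j)) = 0"
      by (simp add: M.scale_left_diff_distrib sum_subtractf)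
    from minimal[OF this that(2)] show ?thesis
      using A.hcomp_homogeneous[OF one_in_Agr_0] by (auto simp: A.hcomp_diff split: if_splits)
  qed
  have "m = R" by (rule dims_eq_if_inverse_and_inverse_under_hom[OF comm_ring_hom_hcomp_0 CD DC])
  have "det (mat m m (\<lambda>(k, l). D k l)) dvd 1"
    using CD unfolding \<open>m = R\<close> by (rule det_dvd_1_if_right_inverse)
  then show ?thesis using M.independent_family_if_det_unit D b(1) \<open>m = R\<close> by blast
qed

lemma homogeneous_basis_exists:
  assumes "\<exists>S. finite S \<and> M.span S = UNIV" and "\<exists>B. M.independent B \<and> M.span B = UNIV"
  obtains R b \<beta> where "homogeneous_basis R b \<beta>"
proof -
  from assms(1) obtain S where "finite S" "M.span S = UNIV" by blast
  then obtain m h \<delta> where h: "homogeneous_family m h \<delta>" "M.span (h ` {..<m}) = UNIV"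
    and minimal: "\<And>lam k. (\<Sum>k<m. sm (lam k) (h k)) = 0 \<Longrightarrow> k < m \<Longrightarrow> hcomp Agr (lam k) 0 = 0"
    using minimal_generating_family_exists by blast
  from assms(2) obtain B where "M.independent B" "M.span B = UNIV" by blast
  then obtain R b where b: "independent_family sm R b" "M.span (b ` {..<R}) = UNIV"
    using M.finite_independent_family_if_free[OF _ _ h(2)] by blast
  have "independent_family sm m h"
    by (rule independent_if_minimal_generating_family[OF h(2) _ b]) (use minimal in blast)
  with h that show ?thesis unfolding homogeneous_basis_def by blast
qed

lemma span_UNIV_if_degree_sums_eq:
  assumes b: "homogeneous_basis r b \<beta>" and g: "homogeneous_family r g d" "independent_family sm r g"
    and sums: "(\<Sum>i<r. d i) = (\<Sum>c<r. \<beta> c)"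
  shows "M.span (g ` {..<r}) = UNIV"
proof -
  from b have b: "homogeneous_family r b \<beta>" "M.span (b ` {..<r}) = UNIV"
    unfolding homogeneous_basis_def by auto
  obtain a where a: "\<And>i. g i = (\<Sum>c<r. sm (a i c) (b c))" using M.span_UNIV_obtains_coefficients[OF b(2)] by blast
  (* Only the component of a i c of degree d i - \<beta> c contributes; with these entries the
     determinant is homogeneous of degree (\<Sum>i<r. d i) - (\<Sum>c<r. \<beta> c) = 0. *)
  define a' where "a' i c = (if \<beta> c \<le> d i then hcomp Agr (a i c) (d i - \<beta> c) else 0)" for i c
  have g': "g i = (\<Sum>c<r. sm (a' i c) (b c))" if "i < r" for i
  proof -
    have "g i = hcomp Mgr (g i) (d i)"
      using MG.hcomp_homogeneous[of "g i" "d i"] g(1) that by (simp add: homogeneous_family_def)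
    also have "\<dots> = (\<Sum>c<r. sm (a' i c) (b c))"
      by (subst a) (simp add: hcomp_combination[OF b(1)] a'_def)
    finally show ?thesis .
  qed
  let ?A = "mat r r (\<lambda>(i, c). a' i c)"
  have "det ?A \<in> Agr 0" by (rule det_in_Agr_0[OF _ _ sums]) (auto simp: a'_def A.hcomp_in A.zero_in)
  moreover have "det ?A \<noteq> 0" by (rule M.det_ne_0_if_independent_family[OF g(2) g'])
  ultimately have "b ` {..<r} \<subseteq> M.span (g ` {..<r})"
    by (intro M.span_if_det_unit[OF _ g'] dvd_one_if_in_Agr_0)
  then show ?thesis using b(2) by (rule M.span_eq_UNIV_if_subset_span)
qed

end

section \<open>Polynomial algebras and Hilbert series\<close>

definition weighted_degree :: "(nat \<Rightarrow> nat) \<Rightarrow> nat \<Rightarrow> (nat \<Rightarrow> nat) \<Rightarrow> nat" where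
  "weighted_degree e n \<alpha> = (\<Sum>j<n. e j * \<alpha> j)"

locale graded_polynomial_algebra = connected_graded phi Agr
  for phi :: "'k::field \<Rightarrow> 'a::comm_ring_1" and Agr +
  fixes n :: nat and x :: "nat \<Rightarrow> 'a" and e :: "nat \<Rightarrow> nat"
  assumes generators: "\<And>j. j < n \<Longrightarrow> 0 < e j \<and> x j \<in> Agr (e j)"
    and monomials_span:
      "\<And>a. \<exists>F c. finite F \<and> F \<subseteq> exponents n \<and> a = (\<Sum>\<alpha>\<in>F. phi (c \<alpha>) * monomial_in n x \<alpha>)"
    and monomials_independent: "\<And>F c \<alpha>. finite F \<Longrightarrow> F \<subseteq> exponents n \<Longrightarrow>
        (\<Sum>\<alpha>\<in>F. phi (c \<alpha>) * monomial_in n x \<alpha>) = 0 \<Longrightarrow> \<alpha> \<in> F \<Longrightarrow> c \<alpha> = 0"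
begin

lemma monomial_in_Agr: "monomial_in n x \<alpha> \<in> Agr (weighted_degree e n \<alpha>)"
  unfolding monomial_in_def weighted_degree_def by (rule prod_in) (use generators power_in in auto)

definition exponents_of_degree :: "nat \<Rightarrow> (nat \<Rightarrow> nat) set" where
  "exponents_of_degree k = {\<alpha> \<in> exponents n. weighted_degree e n \<alpha> = k}"

definition hilbert_fun :: "nat \<Rightarrow> nat" where
  "hilbert_fun k = card (exponents_of_degree k)"

definition free_hilbert_fun :: "nat \<Rightarrow> (nat \<Rightarrow> nat) \<Rightarrow> nat \<Rightarrow> nat" where
  "free_hilbert_fun R \<beta> i = (\<Sum>j<R. if \<beta> j \<le> i then hilbert_fun (i - \<beta> j) else 0)"

lemma finite_exponents_of_degree: "finite (exponents_of_degree k)"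
  and hilbert_fun_le: "hilbert_fun k \<le> (k + 1) ^ n"
proof -
  let ?T = "PiE {..<n} (\<lambda>_. {..k})"
  have inj: "inj_on (\<lambda>\<alpha>. restrict \<alpha> {..<n}) (exponents_of_degree k)"
  proof
    fix \<alpha> \<beta> assume \<alpha>\<beta>: "\<alpha> \<in> exponents_of_degree k" "\<beta> \<in> exponents_of_degree k"
      and eq: "restrict \<alpha> {..<n} = restrict \<beta> {..<n}"
    show "\<alpha> = \<beta>"
    proof
      fix j show "\<alpha> j = \<beta> j"
        using fun_cong[OF eq, of j] \<alpha>\<beta> by (cases "j < n") (auto simp: exponents_of_degree_def exponents_def)
    qed
  qed
  have "restrict \<alpha> {..<n} \<in> ?T" if "\<alpha> \<in> exponents_of_degree k" for \<alpha>
  proof (rule PiE_I)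
    fix j assume j: "j \<in> {..<n}"
    have "\<alpha> j \<le> e j * \<alpha> j" using generators[of j] j by simp
    also have "\<dots> \<le> weighted_degree e n \<alpha>" unfolding weighted_degree_def
      by (rule member_le_sum) (use j in auto)
    finally show "restrict \<alpha> {..<n} j \<in> {..k}" using that j by (simp add: exponents_of_degree_def)
  qed auto
  then have sub: "(\<lambda>\<alpha>. restrict \<alpha> {..<n}) ` exponents_of_degree k \<subseteq> ?T" by blast
  have T: "finite ?T" "card ?T = (k + 1) ^ n" by (simp_all add: finite_PiE card_PiE)
  show "finite (exponents_of_degree k)" using finite_imageD[OF finite_subset[OF sub T(1)] inj] .
  show "hilbert_fun k \<le> (k + 1) ^ n"
    unfolding hilbert_fun_def using card_inj_on_le[OF inj sub T(1)] T(2) by simp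
qed

lemma hcomp_monomial_expansion:
  assumes "finite F"
  shows "hcomp Agr (\<Sum>\<alpha>\<in>F. phi (c \<alpha>) * monomial_in n x \<alpha>) k
    = (\<Sum>\<alpha>\<in>{\<alpha>\<in>F. weighted_degree e n \<alpha> = k}. phi (c \<alpha>) * monomial_in n x \<alpha>)"
  using mult_in[OF phi_in_Agr_0 monomial_in_Agr] assms by (intro A.hcomp_sum_homogeneous) auto

lemma finite_exponents_of_shifted_degree: "finite {\<alpha> \<in> exponents n. weighted_degree e n \<alpha> + b = i}"
  by (rule finite_subset[OF _ finite_exponents_of_degree[of "i - b"]]) (auto simp: exponents_of_degree_def)

lemma hilbert_fun_0_pos: "0 < hilbert_fun 0"
proof -
  have "(\<lambda>_. 0) \<in> exponents_of_degree 0"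
    by (simp add: exponents_of_degree_def exponents_def weighted_degree_def)
  then show ?thesis unfolding hilbert_fun_def using finite_exponents_of_degree card_gt_0_iff by blast
qed

lemma summable_hilbert_fun:
  fixes t :: real assumes t: "0 < t" "t < 1"
  shows "summable (\<lambda>i. real (hilbert_fun i) * t ^ i)"
proof (rule summable_comparison_test[OF _ summable_power_times_geometric[OF t, of n]])
  show "\<exists>N. \<forall>i\<ge>N. norm (real (hilbert_fun i) * t ^ i) \<le> real (Suc i) ^ n * t ^ i"
  proof (intro exI allI impI)
    fix i :: nat
    have "real (hilbert_fun i) \<le> real (Suc i) ^ n"
      using hilbert_fun_le[of i] by (metis Suc_eq_plus1 of_nat_le_iff of_nat_power)
    then show "norm (real (hilbert_fun i) * t ^ i) \<le> real (Suc i) ^ n * t ^ i"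
      using t by (simp add: mult_right_mono)
  qed
qed

end

lemma regular_graded_algebra_iff:
  "regular_graded_algebra phi Agr \<longleftrightarrow> (\<exists>n x e. graded_polynomial_algebra phi Agr n x e)"
  unfolding regular_graded_algebra_def graded_polynomial_algebra_def
    graded_polynomial_algebra_axioms_def connected_graded_def by (simp add: Ball_def)

locale graded_polynomial_module =
  graded_polynomial_algebra phi Agr n x e + graded_module_over phi Agr sm Mgr
  for phi :: "'k::field \<Rightarrow> 'a::comm_ring_1" and Agr n x e
    and sm :: "'a \<Rightarrow> 'm::ab_group_add \<Rightarrow> 'm" and Mgr
begin

definition monomial_index :: "nat \<Rightarrow> (nat \<Rightarrow> nat) \<Rightarrow> nat \<Rightarrow> (nat \<times> (nat \<Rightarrow> nat)) set" where
  "monomial_index R \<beta> i = (SIGMA j:{..<R}. {\<alpha> \<in> exponents n. weighted_degree e n \<alpha> + \<beta> j = i})"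

definition monomial_multiple :: "(nat \<Rightarrow> 'm) \<Rightarrow> nat \<times> (nat \<Rightarrow> nat) \<Rightarrow> 'm" where
  "monomial_multiple b = (\<lambda>(j, \<alpha>). sm (monomial_in n x \<alpha>) (b j))"

lemma finite_monomial_index: "finite (monomial_index R \<beta> i)"
  unfolding monomial_index_def by (intro finite_SigmaI finite_lessThan finite_exponents_of_shifted_degree)

lemma card_monomial_index: "card (monomial_index R \<beta> i) = free_hilbert_fun R \<beta> i"
proof -
  have "{\<alpha> \<in> exponents n. weighted_degree e n \<alpha> + \<beta> j = i}
      = (if \<beta> j \<le> i then exponents_of_degree (i - \<beta> j) else {})" for j
    by (auto simp: exponents_of_degree_def)
  then show ?thesis
    unfolding monomial_index_def free_hilbert_fun_def hilbert_fun_def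
    by (subst card_SigmaI) (auto simp: finite_exponents_of_degree intro!: sum.cong)
qed

lemma monomial_multiples_independent:
  assumes hom: "homogeneous_family R b \<beta>" and ind: "independent_family sm R b"
  shows "inj_on (monomial_multiple b) (monomial_index R \<beta> i)"
    and "V.independent (monomial_multiple b ` monomial_index R \<beta> i)"
    and "monomial_multiple b ` monomial_index R \<beta> i \<subseteq> Mgr i"
proof -
  let ?F = "\<lambda>j. {\<alpha> \<in> exponents n. weighted_degree e n \<alpha> + \<beta> j = i}"
  have F: "finite (?F j)" for j by (rule finite_exponents_of_shifted_degree)
  have "\<forall>p\<in>monomial_index R \<beta> i. f p = 0"
    if rel: "(\<Sum>p\<in>monomial_index R \<beta> i. sm (phi (f p)) (monomial_multiple b p)) = 0" for f
  proof
    have "(\<Sum>p\<in>monomial_index R \<beta> i. sm (phi (f p)) (monomial_multiple b p))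
        = (\<Sum>j<R. \<Sum>\<alpha>\<in>?F j. sm (phi (f (j, \<alpha>))) (monomial_multiple b (j, \<alpha>)))"
      unfolding monomial_index_def by (subst sum.Sigma) (auto simp: F split_def)
    also have "\<dots> = (\<Sum>j<R. sm (\<Sum>\<alpha>\<in>?F j. phi (f (j, \<alpha>)) * monomial_in n x \<alpha>) (b j))"
      by (simp add: monomial_multiple_def M.scale_sum_left)
    finally have "(\<Sum>j<R. sm (\<Sum>\<alpha>\<in>?F j. phi (f (j, \<alpha>)) * monomial_in n x \<alpha>) (b j)) = 0"
      using rel by simp
    from M.independent_familyD[OF ind this]
    have z: "(\<Sum>\<alpha>\<in>?F j. phi (f (j, \<alpha>)) * monomial_in n x \<alpha>) = 0" if "j < R" for j
      using that .
    fix p assume "p \<in> monomial_index R \<beta> i"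
    then obtain j \<alpha> where p: "p = (j, \<alpha>)" "j < R" "\<alpha> \<in> ?F j" unfolding monomial_index_def by auto
    have "(\<lambda>\<alpha>. f (j, \<alpha>)) \<alpha> = 0"
      by (rule monomials_independent[OF F _ z]) (use p in auto)
    then show "f p = 0" using p by simp
  qed
  from V.independent_image_if_coefficients_zero[OF finite_monomial_index this]
  show "inj_on (monomial_multiple b) (monomial_index R \<beta> i)"
    and "V.independent (monomial_multiple b ` monomial_index R \<beta> i)" by blast+
  show "monomial_multiple b ` monomial_index R \<beta> i \<subseteq> Mgr i"
    using hom scale_in[OF monomial_in_Agr]
    by (auto simp: monomial_index_def monomial_multiple_def homogeneous_family_def)
qed

lemma Mgr_subset_span_monomial_multiples:
  assumes hom: "homogeneous_family R b \<beta>" and span: "M.span (b ` {..<R}) = UNIV"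
  shows "Mgr i \<subseteq> V.span (monomial_multiple b ` monomial_index R \<beta> i)"
proof
  fix m assume m: "m \<in> Mgr i"
  obtain a where a: "m = (\<Sum>j<R. sm (a j) (b j))"
    using span unfolding M.span_image_lessThan by blast
  have "m = hcomp Mgr m i" by (simp add: MG.hcomp_homogeneous[OF m])
  also have "\<dots> = (\<Sum>j<R. sm (if \<beta> j \<le> i then hcomp Agr (a j) (i - \<beta> j) else 0) (b j))"
    by (subst a) (rule hcomp_combination[OF hom])
  also have "\<dots> \<in> V.span (monomial_multiple b ` monomial_index R \<beta> i)"
  proof (rule V.span_sum)
    fix j assume j: "j \<in> {..<R}"
    obtain F c where F: "finite F" "F \<subseteq> exponents n" "a j = (\<Sum>\<alpha>\<in>F. phi (c \<alpha>) * monomial_in n x \<alpha>)"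
      using monomials_span by blast
    have "sm (hcomp Agr (a j) (i - \<beta> j)) (b j)
        = (\<Sum>\<alpha>\<in>{\<alpha>\<in>F. weighted_degree e n \<alpha> = i - \<beta> j}. sm (phi (c \<alpha>)) (monomial_multiple b (j, \<alpha>)))"
      unfolding F(3) hcomp_monomial_expansion[OF F(1)] by (simp add: M.scale_sum_left monomial_multiple_def)
    also have "\<beta> j \<le> i \<Longrightarrow> \<dots> \<in> V.span (monomial_multiple b ` monomial_index R \<beta> i)"
      using F(2) j by (intro V.span_sum V.span_scale V.span_base) (auto simp: monomial_index_def)
    finally show "sm (if \<beta> j \<le> i then hcomp Agr (a j) (i - \<beta> j) else 0) (b j)
        \<in> V.span (monomial_multiple b ` monomial_index R \<beta> i)"
      by (simp add: V.span_zero)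
  qed
  finally show "m \<in> V.span (monomial_multiple b ` monomial_index R \<beta> i)" .
qed

lemma card_monomial_multiples:
  assumes "homogeneous_family R b \<beta>" "independent_family sm R b"
  shows "card (monomial_multiple b ` monomial_index R \<beta> i) = free_hilbert_fun R \<beta> i"
  using card_image[OF monomial_multiples_independent(1)[OF assms]] by (simp add: card_monomial_index)

lemma dim_Mgr:
  assumes "homogeneous_basis R b \<beta>"
  shows "V.dim (Mgr i) = free_hilbert_fun R \<beta> i"
proof -
  from assms have b: "homogeneous_family R b \<beta>" "independent_family sm R b" "M.span (b ` {..<R}) = UNIV"
    unfolding homogeneous_basis_def by auto
  have "V.dim (Mgr i) = card (monomial_multiple b ` monomial_index R \<beta> i)"
    using monomial_multiples_independent[OF b(1,2)] Mgr_subset_span_monomial_multiples[OF b(1,3)]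
    by (intro V.basis_card_eq_dim[symmetric]) auto
  then show ?thesis using card_monomial_multiples[OF b(1,2)] by simp
qed

lemma free_hilbert_fun_le_dim:
  assumes b: "homogeneous_basis R b \<beta>" and g: "homogeneous_family r g d" "independent_family sm r g"
  shows "free_hilbert_fun r d i \<le> V.dim (Mgr i)"
proof -
  from b have b: "homogeneous_family R b \<beta>" "independent_family sm R b" "M.span (b ` {..<R}) = UNIV"
    unfolding homogeneous_basis_def by auto
  have "monomial_multiple g ` monomial_index r d i \<subseteq> V.span (monomial_multiple b ` monomial_index R \<beta> i)"
    by (rule subset_trans[OF monomial_multiples_independent(3)[OF g] Mgr_subset_span_monomial_multiples[OF b(1,3)]])
  then have "card (monomial_multiple g ` monomial_index r d i) \<le> card (monomial_multiple b ` monomial_index R \<beta> i)"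
    using V.independent_span_bound[OF finite_imageI[OF finite_monomial_index] monomial_multiples_independent(2)[OF g]]
    by simp
  also have "\<dots> = V.dim (Mgr i)" using dim_Mgr[OF assms(1)] card_monomial_multiples[OF b(1,2)] by simp
  finally show ?thesis using card_monomial_multiples[OF g] by simp
qed

end

context graded_polynomial_algebra
begin

lemma dim_Agr: "vector_space.dim (\<lambda>c a. phi c * a) (Agr i) = hilbert_fun i"
proof -
  interpret self: graded_polynomial_module phi Agr n x e "(*)" Agr
    unfolding graded_polynomial_module_def using graded_polynomial_algebra_axioms graded_module_over_self by blast
  have "self.homogeneous_basis 1 (\<lambda>_. 1) (\<lambda>_. 0)"
    unfolding self.homogeneous_basis_def self.homogeneous_family_def independent_family_def
    using one_in_Agr_0 self.M.span_image_lessThan[of "\<lambda>_. 1" 1] by auto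
  from self.dim_Mgr[OF this] show ?thesis by (simp add: free_hilbert_fun_def)
qed

lemma sums_hilbert_series_Agr:
  fixes t :: real assumes "0 < t" "t < 1"
  shows "(\<lambda>i. real (hilbert_fun i) * t ^ i) sums hilbert_series (\<lambda>c a. phi c * a) Agr t"
  unfolding hilbert_series_def dim_Agr using summable_hilbert_fun[OF assms] by (rule summable_sums)

lemma hilbert_series_Agr_pos:
  fixes t :: real assumes t: "0 < t" "t < 1"
  shows "0 < hilbert_series (\<lambda>c a. phi c * a) Agr t"
proof -
  have "(\<Sum>i<1. real (hilbert_fun i) * t ^ i) \<le> (\<Sum>i. real (hilbert_fun i) * t ^ i)"
    by (rule sum_le_suminf[OF summable_hilbert_fun[OF t]]) (use t in auto)
  then show ?thesis using hilbert_fun_0_pos sums_unique[OF sums_hilbert_series_Agr[OF t]] by simp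
qed

end

context graded_polynomial_module
begin

lemma sums_free_hilbert_fun:
  fixes t :: real assumes "0 < t" "t < 1"
  shows "(\<lambda>i. real (free_hilbert_fun R \<beta> i) * t ^ i)
    sums ((\<Sum>j<R. t ^ \<beta> j) * hilbert_series (\<lambda>c a. phi c * a) Agr t)"
  unfolding free_hilbert_fun_def by (rule sums_sum_shifted[OF sums_hilbert_series_Agr[OF assms]])

lemma hilbert_quotient_eq:
  fixes t :: real assumes b: "homogeneous_basis R b \<beta>" and t: "0 < t" "t < 1"
  shows "hilbert_quotient phi Agr sm Mgr t = (\<Sum>j<R. t ^ \<beta> j)"
proof -
  have "hilbert_series (\<lambda>c m. sm (phi c) m) Mgr t
      = (\<Sum>j<R. t ^ \<beta> j) * hilbert_series (\<lambda>c a. phi c * a) Agr t"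
    using sums_unique[OF sums_free_hilbert_fun[OF t, of R \<beta>]]
    unfolding hilbert_series_def[of "\<lambda>c m. sm (phi c) m"] dim_Mgr[OF b] by simp
  then show ?thesis unfolding hilbert_quotient_def using hilbert_series_Agr_pos[OF t] by simp
qed

lemma rank_inv_eq:
  assumes b: "homogeneous_basis R b \<beta>"
  shows "rank_inv phi Agr sm Mgr = real R"
proof -
  have "eventually (\<lambda>t. (\<Sum>j<R. t ^ \<beta> j) = hilbert_quotient phi Agr sm Mgr t) (at_left (1::real))"
    by (rule eventually_mono[OF eventually_at_left_real[of 0 1]]) (auto simp: hilbert_quotient_eq[OF b])
  from tendsto_cong[OF this] tendsto_sum_powers_at_left_1
  have "(hilbert_quotient phi Agr sm Mgr \<longlongrightarrow> real R) (at_left 1)" by blast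
  then show ?thesis unfolding rank_inv_def by (intro tendsto_Lim) (simp_all add: trivial_limit_at_left_real)
qed

lemma s_inv_eq:
  assumes b: "homogeneous_basis R b \<beta>"
  shows "s_inv phi Agr sm Mgr = real (\<Sum>j<R. \<beta> j)"
proof -
  have "eventually (\<lambda>t. ((\<Sum>j<R. t ^ \<beta> j) - real R) / (t - 1)
      = (hilbert_quotient phi Agr sm Mgr t - rank_inv phi Agr sm Mgr) / (t - 1)) (at_left (1::real))"
    by (rule eventually_mono[OF eventually_at_left_real[of 0 1]])
      (auto simp: hilbert_quotient_eq[OF b] rank_inv_eq[OF b])
  from tendsto_cong[OF this] tendsto_sum_powers_difference_quotient
  have "((\<lambda>t. (hilbert_quotient phi Agr sm Mgr t - rank_inv phi Agr sm Mgr) / (t - 1))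
      \<longlongrightarrow> real (\<Sum>j<R. \<beta> j)) (at_left 1)" by blast
  then show ?thesis unfolding s_inv_def by (intro tendsto_Lim) (simp_all add: trivial_limit_at_left_real)
qed

lemma sum_powers_le_if_independent:
  fixes t :: real
  assumes b: "homogeneous_basis R b \<beta>" and g: "homogeneous_family r g d" "independent_family sm r g"
    and t: "0 < t" "t < 1"
  shows "(\<Sum>j<r. t ^ d j) \<le> (\<Sum>j<R. t ^ \<beta> j)"
proof -
  have "(\<Sum>j<r. t ^ d j) * hilbert_series (\<lambda>c a. phi c * a) Agr t
      \<le> (\<Sum>j<R. t ^ \<beta> j) * hilbert_series (\<lambda>c a. phi c * a) Agr t"
    using free_hilbert_fun_le_dim[OF b g] dim_Mgr[OF b] t
    by (intro sums_le[OF _ sums_free_hilbert_fun[OF t] sums_free_hilbert_fun[OF t]] mult_right_mono) auto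
  then show ?thesis using hilbert_series_Agr_pos[OF t] by simp
qed

theorem degree_sum_of_independent_family:
  assumes fin_gen: "\<exists>S. finite S \<and> M.span S = UNIV" and free: "\<exists>B. M.independent B \<and> M.span B = UNIV"
    and r: "real r = rank_inv phi Agr sm Mgr"
    and g: "homogeneous_family r g d" "independent_family sm r g"
  shows "s_inv phi Agr sm Mgr \<le> real (\<Sum>i<r. d i)"
    and "real (\<Sum>i<r. d i) = s_inv phi Agr sm Mgr \<longleftrightarrow> M.span (g ` {..<r}) = UNIV"
proof -
  obtain R b \<beta> where b: "homogeneous_basis R b \<beta>" using homogeneous_basis_exists[OF fin_gen free] .
  with r have "R = r" using rank_inv_eq by simp
  with b have b: "homogeneous_basis r b \<beta>" and s: "s_inv phi Agr sm Mgr = real (\<Sum>j<r. \<beta> j)"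
    using s_inv_eq by auto
  show "s_inv phi Agr sm Mgr \<le> real (\<Sum>i<r. d i)"
    unfolding s of_nat_le_iff by (rule degree_sum_le_if_sum_powers_le[OF sum_powers_le_if_independent[OF b g]])
  show "real (\<Sum>i<r. d i) = s_inv phi Agr sm Mgr \<longleftrightarrow> M.span (g ` {..<r}) = UNIV"
  proof
    assume "real (\<Sum>i<r. d i) = s_inv phi Agr sm Mgr"
    then have "(\<Sum>i<r. d i) = (\<Sum>c<r. \<beta> c)" unfolding s by (simp only: of_nat_eq_iff)
    then show "M.span (g ` {..<r}) = UNIV" by (rule span_UNIV_if_degree_sums_eq[OF b g])
  next
    assume "M.span (g ` {..<r}) = UNIV"
    with g have "homogeneous_basis r g d" unfolding homogeneous_basis_def by blast
    then show "real (\<Sum>i<r. d i) = s_inv phi Agr sm Mgr" by (simp add: s_inv_eq)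
  qed
qed

end

theorem proposition2p2:
  fixes phi :: "'k::field \<Rightarrow> 'a::comm_ring_1"
    and Agr :: "nat \<Rightarrow> 'a set"
    and sm :: "'a \<Rightarrow> 'm::ab_group_add \<Rightarrow> 'm"
    and Mgr :: "nat \<Rightarrow> 'm set"
    and r :: nat
    and g :: "nat \<Rightarrow> 'm"
    and d :: "nat \<Rightarrow> nat"
  assumes A_regular: "regular_graded_algebra phi Agr"
    and M_graded: "graded_module Agr sm Mgr"
    and M_fin_gen: "\<exists>S. finite S \<and> module.span sm S = UNIV"
    and M_free: "\<exists>B. module.independent sm B \<and> module.span sm B = UNIV"
    and r_def: "real r = rank_inv phi Agr sm Mgr"
    and g_homog: "\<forall>i<r. g i \<in> Mgr (d i)"
    and g_indep: "\<forall>a. (\<Sum>i<r. sm (a i) (g i)) = 0 \<longrightarrow> (\<forall>i<r. a i = 0)"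
  shows "(\<Sum>i<r. real (d i)) \<ge> s_inv phi Agr sm Mgr
    \<and> ((\<Sum>i<r. real (d i)) = s_inv phi Agr sm Mgr \<longleftrightarrow> module.span sm (g ` {..<r}) = UNIV)"
proof -
  obtain n x e where "graded_polynomial_algebra phi Agr n x e"
    using A_regular regular_graded_algebra_iff by blast
  then interpret graded_polynomial_module phi Agr n x e sm Mgr
    using M_graded by (simp add: graded_polynomial_module_def graded_module_over_def graded_module_over_axioms_def
        graded_polynomial_algebra_def)
  have "homogeneous_family r g d" "independent_family sm r g"
    using g_homog g_indep by (simp_all add: homogeneous_family_def independent_family_def)
  from degree_sum_of_independent_family[OF M_fin_gen M_free r_def this] show ?thesis by simp
qed

end
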